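(* There is no complete pointed metric space $(M,d)$ and no $f\in \mathrm{Lip}_0(M,M)$ such that $\widehat f$ is a wild operator on $\mathcal F(M)$. More precisely, for every such $M$ and $f$: if $R_{\widehat f}$ has nonempty interior then $A_{\widehat f}$ has empty interior.
   Context: A pointed metric space is a metric space $(M,d)$ with a distinguished point $0=0_M$. For pointed metric spaces $M,N$, $\mathrm{Lip}_0(M,N)$ denotes the set of Lipschitz maps $f:M\to N$ with $f(0_M)=0_N$, and $\mathrm{Lip}_0(M)=\mathrm{Lip}_0(M,\mathbb R)$, a Banach space with norm $\mathrm{Lip}(\cdot)$ (the least Lipschitz constant). Let $\delta:M\to \mathrm{Lip}_0(M)^*$, $\delta(x)(\varphi)=\varphi(x)$. The Lipschitz-free space $\mathcal F(M)$ is the norm-closed linear span of $\delta(M)$ in $\mathrm{Lip}_0(M)^*$. For $f\in\mathrm{Lip}_0(M,N)$, $\widehat f:\mathcal F(M)\to\mathcal F(N)$ is the unique bounded linear operator with $\widehat f(\delta_M(x))=\delta_N(f(x))$ for all $x\in M$; $\|\widehat f\|=\mathrm{Lip}(f)$. For a self-map $g$ of a pointed metric space $(X,d)$ (in particular for a bounded linear operator on a Banach space, with base point the origin and the norm distance), write $R_g=\{x:\liminf_{n\to\infty} d(x,g^n(x))=0\}$, $U_g=\{x:\limsup_{n\to\infty} d(0,g^n(x))=\infty\}$, $A_g=\{x:\lim_{n\to\infty} d(0,g^n(x))=\infty\}$. A bounded linear operator $T$ on a Banach space $X$ is called wild if $X=A_T\cup R_T$, $\mathrm{int}(R_T)\neq\emptyset$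 and $\mathrm{int}(A_T)\neq\emptyset$. *)

theory Defs
  imports "HOL-Analysis.Analysis"
begin

text \<open>Pointed metric space: a type 'a of class metric_space with a base point z.
  Elements of Lip_0(M)^* are represented as functions from ('a => real) to real,
  taking the value 0 outside Lip_0(M).\<close>

definition Lip0 :: "'a::metric_space \<Rightarrow> ('a \<Rightarrow> real) set" where
  "Lip0 z = {\<phi>. (\<exists>C. lipschitz_on C UNIV \<phi>) \<and> \<phi> z = 0}"

definition lipconst :: "('a::metric_space \<Rightarrow> 'b::metric_space) \<Rightarrow> real" where
  "lipconst g = Inf {C. lipschitz_on C UNIV g}"

definition dbounded :: "'a::metric_space \<Rightarrow> (('a \<Rightarrow> real) \<Rightarrow> real) \<Rightarrow> bool" where
  "dbounded z \<mu> = bdd_above {\<bar>\<mu> \<phi>\<bar> | \<phi>. \<phi> \<in> Lip0 z \<and> lipconst \<phi> \<le> 1}"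

definition dnorm :: "'a::metric_space \<Rightarrow> (('a \<Rightarrow> real) \<Rightarrow> real) \<Rightarrow> real" where
  "dnorm z \<mu> = Sup (insert 0 {\<bar>\<mu> \<phi>\<bar> | \<phi>. \<phi> \<in> Lip0 z \<and> lipconst \<phi> \<le> 1})"

definition fdiff :: "('b \<Rightarrow> real) \<Rightarrow> ('b \<Rightarrow> real) \<Rightarrow> ('b \<Rightarrow> real)" where
  "fdiff \<mu> \<nu> = (\<lambda>\<phi>. \<mu> \<phi> - \<nu> \<phi>)"

definition delta :: "'a::metric_space \<Rightarrow> 'a \<Rightarrow> (('a \<Rightarrow> real) \<Rightarrow> real)" where
  "delta z x = (\<lambda>\<phi>. if \<phi> \<in> Lip0 z then \<phi> x else 0)"

definition delta_span :: "'a::metric_space \<Rightarrow> (('a \<Rightarrow> real) \<Rightarrow> real) set" where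
  "delta_span z = {\<mu>. \<exists>S c. finite S \<and> \<mu> = (\<lambda>\<phi>. \<Sum>x\<in>S. c x * delta z x \<phi>)}"

definition Free :: "'a::metric_space \<Rightarrow> (('a \<Rightarrow> real) \<Rightarrow> real) set" where
  "Free z = {\<mu>. (\<forall>\<phi>. \<phi> \<notin> Lip0 z \<longrightarrow> \<mu> \<phi> = 0) \<and> dbounded z \<mu> \<and>
      (\<forall>\<epsilon>>0. \<exists>\<nu>\<in>delta_span z. dnorm z (fdiff \<mu> \<nu>) < \<epsilon>)}"

definition bounded_linear_on_Free ::
  "'a::metric_space \<Rightarrow> ((('a \<Rightarrow> real) \<Rightarrow> real) \<Rightarrow> (('a \<Rightarrow> real) \<Rightarrow> real)) \<Rightarrow> bool" where
  "bounded_linear_on_Free z T \<longleftrightarrow>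
     (\<forall>\<mu>\<in>Free z. T \<mu> \<in> Free z) \<and>
     (\<forall>\<mu>\<in>Free z. \<forall>\<nu>\<in>Free z. \<forall>a b::real.
        T (\<lambda>\<phi>. a * \<mu> \<phi> + b * \<nu> \<phi>) = (\<lambda>\<phi>. a * T \<mu> \<phi> + b * T \<nu> \<phi>)) \<and>
     (\<exists>K. \<forall>\<mu>\<in>Free z. dnorm z (T \<mu>) \<le> K * dnorm z \<mu>)"

definition Rset :: "'a::metric_space \<Rightarrow> ((('a \<Rightarrow> real) \<Rightarrow> real) \<Rightarrow> (('a \<Rightarrow> real) \<Rightarrow> real))
     \<Rightarrow> (('a \<Rightarrow> real) \<Rightarrow> real) set" where
  "Rset z T = {\<mu>\<in>Free z. liminf (\<lambda>n. ereal (dnorm z (fdiff \<mu> ((T ^^ n) \<mu>)))) = 0}"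

definition Aset :: "'a::metric_space \<Rightarrow> ((('a \<Rightarrow> real) \<Rightarrow> real) \<Rightarrow> (('a \<Rightarrow> real) \<Rightarrow> real))
     \<Rightarrow> (('a \<Rightarrow> real) \<Rightarrow> real) set" where
  "Aset z T = {\<mu>\<in>Free z. filterlim (\<lambda>n. dnorm z ((T ^^ n) \<mu>)) at_top sequentially}"

definition free_interior :: "'a::metric_space \<Rightarrow> (('a \<Rightarrow> real) \<Rightarrow> real) set
     \<Rightarrow> (('a \<Rightarrow> real) \<Rightarrow> real) set" where
  "free_interior z S = {\<mu>\<in>Free z. \<exists>\<epsilon>>0. \<forall>\<nu>\<in>Free z. dnorm z (fdiff \<nu> \<mu>) < \<epsilon> \<longrightarrow> \<nu> \<in> S}"

end

theory Submission
  imports Defs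
begin

text \<open>Suppose \<open>\<nu>\<^sub>0\<close> has a ball of recurrent points around it and \<open>\<mu>\<close> escapes to infinity;
  by density both may be taken finitely supported, \<open>\<mu> = \<Sum>\<^sub>k \<gamma>\<^sub>k \<delta>(x\<^sub>k)\<close>, and then
  \<open>w = \<nu> + t\<mu>\<close> is recurrent for all small \<open>t > 0\<close>. For generic \<open>t\<close>, every subset of the support
  on which the coefficients \<open>a\<^sub>k\<close> of \<open>w\<close> sum to zero is one on which the \<open>\<gamma>\<^sub>k\<close> sum to zero.
  Whenever \<open>T\<^sup>n w = \<Sum>\<^sub>k a\<^sub>k \<delta>(f\<^sup>n x\<^sub>k)\<close> has norm at most \<open>B\<close>, group the points \<open>f\<^sup>n x\<^sub>k\<close>
  into chains with steps of length at most \<open>L \<approx> B / m\<close>, where \<open>m\<close> is the least nonzero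
  \<open>|\<Sum>\<^sub>S a\<^sub>k|\<close>. Testing \<open>T\<^sup>n w\<close> against a bump function shows that a class far from the
  base point carries zero \<open>a\<close>-mass, hence zero \<open>\<gamma>\<close>-mass; so every class contributes to
  \<open>T\<^sup>n \<mu>\<close> at most a multiple of its diameter, and \<open>\<parallel>T\<^sup>n \<mu>\<parallel>\<close> is bounded independently of
  \<open>n\<close> at the infinitely many return times of \<open>w\<close>, contradicting the escape of \<open>\<mu>\<close>.\<close>

lemma lipschitz_on_imp_dist_le_lipconst:
  assumes "lipschitz_on C UNIV g"
  shows "dist (g x) (g y) \<le> lipconst g * dist x y"
proof (cases "x = y")
  case False
  then have d: "dist x y > 0" by simp
  have "dist (g x) (g y) / dist x y \<le> lipconst g"
    unfolding lipconst_def
  proof (rule cInf_greatest)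
    show "{C. lipschitz_on C UNIV g} \<noteq> {}" using assms by auto
  next
    fix D assume "D \<in> {C. lipschitz_on C UNIV g}"
    then have "dist (g x) (g y) \<le> D * dist x y" by (auto simp: lipschitz_on_def)
    then show "dist (g x) (g y) / dist x y \<le> D" using d by (simp add: divide_le_eq)
  qed
  then show ?thesis using d by (simp add: divide_le_eq mult.commute)
qed simp

lemma Lip0_unit_ball_dist:
  assumes "\<phi> \<in> Lip0 z" "lipconst \<phi> \<le> 1"
  shows "\<bar>\<phi> x - \<phi> y\<bar> \<le> dist x y"
proof -
  obtain C where "lipschitz_on C UNIV \<phi>" using assms(1) by (auto simp: Lip0_def)
  then have "dist (\<phi> x) (\<phi> y) \<le> lipconst \<phi> * dist x y"
    by (rule lipschitz_on_imp_dist_le_lipconst)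
  also have "\<dots> \<le> dist x y" using mult_right_mono[OF assms(2), of "dist x y"] by simp
  finally show ?thesis by (simp add: dist_real_def)
qed

lemma Lip0_unit_ball_abs:
  assumes "\<phi> \<in> Lip0 z" "lipconst \<phi> \<le> 1"
  shows "\<bar>\<phi> x\<bar> \<le> dist x z"
  using Lip0_unit_ball_dist[OF assms, of x z] assms(1) by (simp add: Lip0_def)

lemma Lip0_unit_ballI:
  assumes "lipschitz_on 1 UNIV \<phi>" "\<phi> z = 0"
  shows "\<phi> \<in> Lip0 z" "lipconst \<phi> \<le> 1"
proof -
  show "\<phi> \<in> Lip0 z" using assms by (auto simp: Lip0_def)
  show "lipconst \<phi> \<le> 1" unfolding lipconst_def
    by (rule cInf_lower) (use assms in \<open>auto simp: bdd_below_def lipschitz_on_def intro!: exI[of _ 0]\<close>)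
qed

lemma Lip0_unit_ball_zero: "(\<lambda>_. 0::real) \<in> Lip0 z" "lipconst (\<lambda>_. 0::real) \<le> 1"
  by (rule Lip0_unit_ballI; simp add: lipschitz_on_def)+

lemma dnorm_zero: "dnorm z (\<lambda>_. 0) = 0"
  unfolding dnorm_def by (rule cSup_eq_maximum) auto

lemma dboundedI:
  assumes "\<And>\<phi>. \<phi> \<in> Lip0 z \<Longrightarrow> lipconst \<phi> \<le> 1 \<Longrightarrow> \<bar>\<mu> \<phi>\<bar> \<le> K"
  shows "dbounded z \<mu>"
  unfolding dbounded_def bdd_above_def using assms by blast

lemma abs_le_dnorm:
  assumes "dbounded z \<mu>" "\<phi> \<in> Lip0 z" "lipconst \<phi> \<le> 1"
  shows "\<bar>\<mu> \<phi>\<bar> \<le> dnorm z \<mu>"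
  unfolding dnorm_def by (rule cSup_upper) (use assms in \<open>auto simp: dbounded_def\<close>)

lemma dnorm_leI:
  assumes "\<And>\<phi>. \<phi> \<in> Lip0 z \<Longrightarrow> lipconst \<phi> \<le> 1 \<Longrightarrow> \<bar>\<mu> \<phi>\<bar> \<le> K"
  shows "dnorm z \<mu> \<le> K"
proof -
  have "0 \<le> K" using assms[OF Lip0_unit_ball_zero] by linarith
  then show ?thesis unfolding dnorm_def by (intro cSup_least) (use assms in auto)
qed

lemma dnorm_nonneg: "dbounded z \<mu> \<Longrightarrow> 0 \<le> dnorm z \<mu>"
  using abs_le_dnorm[OF _ Lip0_unit_ball_zero] by (meson abs_ge_zero order_trans)

lemma dnorm_fdiff_commute: "dnorm z (fdiff \<mu> \<nu>) = dnorm z (fdiff \<nu> \<mu>)"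
  unfolding dnorm_def fdiff_def by (simp add: abs_minus_commute)

lemma dbounded_fdiff:
  assumes "dbounded z \<mu>" "dbounded z \<nu>"
  shows "dbounded z (fdiff \<mu> \<nu>)"
  by (rule dboundedI[where K = "dnorm z \<mu> + dnorm z \<nu>"])
     (use abs_le_dnorm[OF assms(1)] abs_le_dnorm[OF assms(2)] in \<open>force simp: fdiff_def\<close>)

lemma Free_dbounded: "\<mu> \<in> Free z \<Longrightarrow> dbounded z \<mu>"
  by (simp add: Free_def)

text \<open>Combinations are indexed, points may repeat: then \<open>T\<^sup>n\<close> acts just by composing the
  points with \<open>f\<^sup>n\<close>, even where \<open>f\<close> identifies points.\<close>

definition comb :: "'a::metric_space \<Rightarrow> 'j set \<Rightarrow> ('j \<Rightarrow> real) \<Rightarrow> ('j \<Rightarrow> 'a) \<Rightarrow> (('a \<Rightarrow> real) \<Rightarrow> real)"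
  where "comb z J a P = (\<lambda>\<phi>. \<Sum>k\<in>J. a k * delta z (P k) \<phi>)"

lemma comb_apply: "\<phi> \<in> Lip0 z \<Longrightarrow> comb z J a P \<phi> = (\<Sum>k\<in>J. a k * \<phi> (P k))"
  by (simp add: comb_def delta_def)

lemma comb_lincomb:
  "(\<lambda>\<phi>. c * comb z J a P \<phi> + d * comb z J b P \<phi>) = comb z J (\<lambda>k. c * a k + d * b k) P"
  by (simp add: comb_def fun_eq_iff sum_distrib_left sum.distrib algebra_simps)

lemma comb_in_delta_span:
  assumes "finite J"
  shows "comb z J a P \<in> delta_span z"
proof -
  have "comb z J a P = (\<lambda>\<phi>. \<Sum>x\<in>P ` J. (\<Sum>k\<in>{k\<in>J. P k = x}. a k) * delta z x \<phi>)"
  proof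
    fix \<phi>
    have "comb z J a P \<phi> = (\<Sum>x\<in>P ` J. \<Sum>k\<in>{k\<in>J. P k = x}. a k * delta z (P k) \<phi>)"
      unfolding comb_def by (rule sum.image_gen[OF assms])
    also have "\<dots> = (\<Sum>x\<in>P ` J. (\<Sum>k\<in>{k\<in>J. P k = x}. a k) * delta z x \<phi>)"
      by (rule sum.cong) (auto simp: sum_distrib_right)
    finally show "comb z J a P \<phi> = \<dots>" .
  qed
  then show ?thesis unfolding delta_span_def using assms
    by (intro CollectI exI[of _ "P ` J"] exI[of _ "\<lambda>x. \<Sum>k\<in>{k\<in>J. P k = x}. a k"]) simp
qed

lemma delta_span_common_comb:
  fixes z :: "'a::metric_space"
  assumes "\<mu> \<in> delta_span z" "\<nu> \<in> delta_span z"
  obtains J :: "('a + 'a) set" and P a b where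
    "finite J" "\<mu> = comb z J a P" "\<nu> = comb z J b P"
proof -
  obtain S c where S: "finite S" "\<mu> = (\<lambda>\<phi>. \<Sum>x\<in>S. c x * delta z x \<phi>)"
    using assms(1) unfolding delta_span_def by blast
  obtain S' c' where S': "finite S'" "\<nu> = (\<lambda>\<phi>. \<Sum>x\<in>S'. c' x * delta z x \<phi>)"
    using assms(2) unfolding delta_span_def by blast
  have \<mu>_eq: "\<mu> = comb z (S <+> S') (case_sum c (\<lambda>_. 0)) (case_sum id id)"
    using S S'(1) by (simp add: comb_def sum.Plus)
  have \<nu>_eq: "\<nu> = comb z (S <+> S') (case_sum (\<lambda>_. 0) c') (case_sum id id)"
    using S' S(1) by (simp add: comb_def sum.Plus)
  show ?thesis using S(1) S'(1) by (intro that[OF _ \<mu>_eq \<nu>_eq]) simp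
qed

lemma delta_span_subset_Free: "delta_span z \<subseteq> Free z"
proof
  fix \<mu> assume \<mu>: "\<mu> \<in> delta_span z"
  then obtain S c where S: "finite S" "\<mu> = comb z S c id"
    unfolding delta_span_def comb_def by auto
  have "\<bar>\<mu> \<phi>\<bar> \<le> (\<Sum>x\<in>S. \<bar>c x\<bar> * dist x z)" if "\<phi> \<in> Lip0 z" "lipconst \<phi> \<le> 1" for \<phi>
  proof -
    have "\<bar>\<mu> \<phi>\<bar> \<le> (\<Sum>x\<in>S. \<bar>c x * \<phi> x\<bar>)"
      unfolding S(2) comb_apply[OF that(1)] by (simp add: sum_abs)
    also have "\<dots> \<le> (\<Sum>x\<in>S. \<bar>c x\<bar> * dist x z)"
      by (rule sum_mono) (use Lip0_unit_ball_abs[OF that] in \<open>auto simp: abs_mult intro: mult_left_mono\<close>)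
    finally show ?thesis .
  qed
  then have "dbounded z \<mu>" by (rule dboundedI)
  moreover have "\<forall>\<epsilon>>0. \<exists>\<nu>\<in>delta_span z. dnorm z (fdiff \<mu> \<nu>) < \<epsilon>"
  proof (intro allI impI bexI[OF _ \<mu>])
    show "dnorm z (fdiff \<mu> \<mu>) < \<epsilon>" if "0 < \<epsilon>" for \<epsilon>
      using that by (simp add: fdiff_def dnorm_zero)
  qed
  moreover have "\<forall>\<phi>. \<phi> \<notin> Lip0 z \<longrightarrow> \<mu> \<phi> = 0"
    by (simp add: S(2) comb_def delta_def)
  ultimately show "\<mu> \<in> Free z" unfolding Free_def by simp
qed

lemma comb_in_Free: "finite J \<Longrightarrow> comb z J a P \<in> Free z"
  using comb_in_delta_span delta_span_subset_Free by blast

lemma bounded_linear_on_Free_comb: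
  assumes T: "bounded_linear_on_Free z T" and T_delta: "\<forall>x. T (delta z x) = delta z (f x)"
    and "finite J"
  shows "T (comb z J a P) = comb z J a (f \<circ> P)"
proof -
  have lin: "\<And>\<mu> \<nu> c d. \<mu> \<in> Free z \<Longrightarrow> \<nu> \<in> Free z \<Longrightarrow>
      T (\<lambda>\<phi>. c * \<mu> \<phi> + d * \<nu> \<phi>) = (\<lambda>\<phi>. c * T \<mu> \<phi> + d * T \<nu> \<phi>)"
    using T by (simp add: bounded_linear_on_Free_def)
  show ?thesis
    using \<open>finite J\<close>
  proof (induction J rule: finite_induct)
    case empty
    have "comb z {} a P \<in> Free z" by (rule comb_in_Free) simp
    from lin[OF this this, of 0 0] show ?case by (simp add: comb_def)
  next
    case (insert k J)
    have "delta z (P k) = comb z {k} (\<lambda>_. 1) P" by (simp add: comb_def)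
    then have "delta z (P k) \<in> Free z" by (simp add: comb_in_Free)
    moreover have "comb z J a P \<in> Free z" using insert(1) by (rule comb_in_Free)
    ultimately have "T (\<lambda>\<phi>. a k * delta z (P k) \<phi> + 1 * comb z J a P \<phi>)
        = (\<lambda>\<phi>. a k * T (delta z (P k)) \<phi> + 1 * T (comb z J a P) \<phi>)"
      by (rule lin)
    then show ?case using insert(1,2,3) T_delta by (simp add: comb_def)
  qed
qed

lemma bounded_linear_on_Free_funpow_comb:
  assumes "bounded_linear_on_Free z T" "\<forall>x. T (delta z x) = delta z (f x)" "finite J"
  shows "(T ^^ n) (comb z J a P) = comb z J a ((f ^^ n) \<circ> P)"
proof (induction n)
  case (Suc n)
  then show ?case
    using bounded_linear_on_Free_comb[OF assms] by (simp add: comp_def)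
qed simp

definition near_pairs :: "real \<Rightarrow> ('j \<Rightarrow> 'a::metric_space) \<Rightarrow> 'j set \<Rightarrow> ('j \<times> 'j) set"
  where "near_pairs L P J = {(i, j). i \<in> J \<and> j \<in> J \<and> dist (P i) (P j) \<le> L}"

definition chain_class :: "real \<Rightarrow> ('j \<Rightarrow> 'a::metric_space) \<Rightarrow> 'j set \<Rightarrow> 'j \<Rightarrow> 'j set"
  where "chain_class L P J i = {j. (i, j) \<in> (near_pairs L P J)\<^sup>+}"

lemma relpow_dist_le:
  assumes "\<forall>(i, j)\<in>R. dist (P i) (P j) \<le> L" "(i, j) \<in> R ^^ n"
  shows "dist (P i) (P j) \<le> real n * L"
  using assms(2)
proof (induction n arbitrary: j)
  case (Suc n)
  then obtain y where y: "(i, y) \<in> R ^^ n" "(y, j) \<in> R" by auto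
  have "dist (P i) (P j) \<le> dist (P i) (P y) + dist (P y) (P j)" by (rule dist_triangle)
  also have "\<dots> \<le> real n * L + L" using Suc.IH[OF y(1)] y(2) assms(1) by fastforce
  finally show ?case by (simp add: algebra_simps)
qed simp

lemma chain_class_subset: "chain_class L P J i \<subseteq> J"
  using trancl_subset_Sigma[of "near_pairs L P J" J]
  by (auto simp: chain_class_def near_pairs_def)

lemma chain_class_refl: "i \<in> J \<Longrightarrow> 0 \<le> L \<Longrightarrow> i \<in> chain_class L P J i"
  by (auto simp: chain_class_def near_pairs_def intro!: r_into_trancl)

lemma chain_class_eq:
  assumes "j \<in> chain_class L P J i"
  shows "chain_class L P J j = chain_class L P J i"
proof -
  have "sym (near_pairs L P J)" by (auto simp: near_pairs_def sym_def dist_commute)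
  then have "(j, i) \<in> (near_pairs L P J)\<^sup>+"
    using assms by (simp add: chain_class_def sym_trancl[THEN symD])
  with assms show ?thesis unfolding chain_class_def by (auto intro: trancl_trans)
qed

lemma dist_le_in_chain_class:
  assumes "finite J" "0 \<le> L" "j \<in> chain_class L P J i"
  shows "dist (P i) (P j) \<le> real (card J ^ 2) * L"
proof -
  define E where "E = near_pairs L P J"
  have "E \<subseteq> J \<times> J" by (auto simp: E_def near_pairs_def)
  then have "finite E" and card_E: "card E \<le> card J ^ 2"
    using assms(1) card_mono[of "J \<times> J" E] finite_subset[of E "J \<times> J"]
    by (auto simp: card_cartesian_product power2_eq_square)
  have "(i, j) \<in> ntrancl (card E - 1) E"
    using assms(3) finite_trancl_ntranl[OF \<open>finite E\<close>] by (simp add: chain_class_def E_def)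
  then obtain n where n: "0 < n" "n \<le> Suc (card E - 1)" "(i, j) \<in> E ^^ n"
    unfolding ntrancl_def by auto
  have "E \<noteq> {}" using n by (auto simp: relpow_empty)
  then have "n \<le> card E" using n(2) \<open>finite E\<close> by (simp add: card_gt_0_iff)
  have "dist (P i) (P j) \<le> real n * L"
    by (rule relpow_dist_le[OF _ n(3)]) (auto simp: E_def near_pairs_def)
  also have "\<dots> \<le> real (card J ^ 2) * L"
    using \<open>n \<le> card E\<close> card_E assms(2) by (intro mult_right_mono) simp_all
  finally show ?thesis .
qed

lemma dist_gt_outside_chain_class:
  assumes "j \<in> chain_class L P J i" "k \<in> J" "k \<notin> chain_class L P J i"
  shows "L < dist (P j) (P k)"
proof (rule ccontr)
  assume "\<not> L < dist (P j) (P k)"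
  then have "(j, k) \<in> near_pairs L P J"
    using assms(1,2) chain_class_subset by (force simp: near_pairs_def)
  with assms(1,3) show False by (auto simp: chain_class_def intro: trancl_into_trancl)
qed

lemma sum_chain_classes:
  assumes "finite J" "0 \<le> L"
  shows "sum h J = (\<Sum>C\<in>chain_class L P J ` J. sum h C)"
proof -
  have "sum h J = (\<Sum>C\<in>chain_class L P J ` J. sum h {i \<in> J. chain_class L P J i = C})"
    by (rule sum.group[symmetric]) (use assms(1) in auto)
  also have "\<dots> = (\<Sum>C\<in>chain_class L P J ` J. sum h C)"
  proof (rule sum.cong[OF refl])
    fix C assume "C \<in> chain_class L P J ` J"
    then obtain i where "i \<in> J" and C: "C = chain_class L P J i" by auto
    have "{j \<in> J. chain_class L P J j = C} = C"
    proof (intro equalityI subsetI)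
      fix j assume "j \<in> {j \<in> J. chain_class L P J j = C}"
      then show "j \<in> C" using chain_class_refl[OF _ assms(2), of j J P] by simp
    next
      fix j assume "j \<in> C"
      then show "j \<in> {j \<in> J. chain_class L P J j = C}"
        using chain_class_subset[of L P J i] chain_class_eq[of j L P J i] by (auto simp: C)
    qed
    then show "sum h {j \<in> J. chain_class L P J j = C} = sum h C" by simp
  qed
  finally show ?thesis .
qed

lemma abs_sum_mult_le:
  fixes g x :: "'j \<Rightarrow> real"
  assumes "\<And>k. k \<in> C \<Longrightarrow> \<bar>x k\<bar> \<le> D"
  shows "\<bar>\<Sum>k\<in>C. g k * x k\<bar> \<le> D * (\<Sum>k\<in>C. \<bar>g k\<bar>)"
proof -
  have "\<bar>\<Sum>k\<in>C. g k * x k\<bar> \<le> (\<Sum>k\<in>C. \<bar>g k\<bar> * \<bar>x k\<bar>)"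
    using sum_abs[of "\<lambda>k. g k * x k" C] by (simp add: abs_mult)
  also have "\<dots> \<le> (\<Sum>k\<in>C. \<bar>g k\<bar> * D)"
    by (rule sum_mono) (use assms in \<open>simp add: mult_left_mono\<close>)
  finally show ?thesis by (simp add: sum_distrib_left mult.commute)
qed

lemma isolated_sum_bound:
  fixes P :: "'j \<Rightarrow> 'a::metric_space"
  assumes "finite J" "C \<subseteq> J" "C \<noteq> {}" "0 \<le> L"
    and far_rest: "\<And>k j. k \<in> C \<Longrightarrow> j \<in> J - C \<Longrightarrow> L \<le> dist (P j) (P k)"
    and far_base: "\<And>k. k \<in> C \<Longrightarrow> L \<le> dist z (P k)"
    and B: "\<And>\<phi>. \<phi> \<in> Lip0 z \<Longrightarrow> lipconst \<phi> \<le> 1 \<Longrightarrow> \<bar>\<Sum>k\<in>J. a k * \<phi> (P k)\<bar> \<le> B"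
  shows "L * \<bar>\<Sum>k\<in>C. a k\<bar> \<le> B"
proof -
  define \<psi> where "\<psi> x = max 0 (L - infdist x (P ` C))" for x
  have \<psi>_far: "\<psi> x = 0" if "\<And>k. k \<in> C \<Longrightarrow> L \<le> dist x (P k)" for x
  proof -
    have "P ` C \<noteq> {}" using assms(3) by simp
    have "L \<le> (INF y\<in>P ` C. dist x y)"
      by (rule cINF_greatest) (use \<open>P ` C \<noteq> {}\<close> that in auto)
    then have "L \<le> infdist x (P ` C)" using infdist_notempty[OF \<open>P ` C \<noteq> {}\<close>] by simp
    then show ?thesis by (simp add: \<psi>_def)
  qed
  have "lipschitz_on 1 UNIV \<psi>"
  proof (rule lipschitz_onI)
    fix x y
    have "\<bar>\<psi> x - \<psi> y\<bar> \<le> \<bar>infdist x (P ` C) - infdist y (P ` C)\<bar>"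
      unfolding \<psi>_def by linarith
    then show "dist (\<psi> x) (\<psi> y) \<le> 1 * dist x y"
      using infdist_triangle_abs[of x "P ` C" y] by (simp add: dist_real_def)
  qed simp
  moreover have "\<psi> z = 0" by (rule \<psi>_far) (rule far_base)
  ultimately have "\<bar>\<Sum>k\<in>J. a k * \<psi> (P k)\<bar> \<le> B" by (intro B Lip0_unit_ballI)
  moreover have "(\<Sum>k\<in>J. a k * \<psi> (P k)) = L * (\<Sum>k\<in>C. a k)"
  proof -
    have "(\<Sum>k\<in>J. a k * \<psi> (P k)) = (\<Sum>k\<in>J - C. a k * \<psi> (P k)) + (\<Sum>k\<in>C. a k * \<psi> (P k))"
      by (rule sum.subset_diff[OF assms(2,1)])
    moreover have "\<psi> (P k) = 0" if "k \<in> J - C" for k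
      by (rule \<psi>_far) (use far_rest that in auto)
    moreover have "\<psi> (P k) = L" if "k \<in> C" for k
      using that assms(4) by (simp add: \<psi>_def)
    ultimately show ?thesis by (simp add: sum_distrib_left mult.commute)
  qed
  ultimately show ?thesis using assms(4) by (simp add: abs_mult)
qed

lemma chain_class_sum_bound:
  fixes P :: "'j \<Rightarrow> 'a::metric_space"
  assumes "finite J" "0 \<le> L" and \<phi>: "\<phi> \<in> Lip0 z" "lipconst \<phi> \<le> 1"
    and "sum \<gamma> (chain_class L P J i) = 0 \<or> (\<exists>j\<in>chain_class L P J i. dist (P j) z \<le> L)"
  shows "\<bar>\<Sum>k\<in>chain_class L P J i. \<gamma> k * \<phi> (P k)\<bar>
           \<le> (real (card J ^ 2) + 1) * L * (\<Sum>k\<in>chain_class L P J i. \<bar>\<gamma> k\<bar>)"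
    (is "\<bar>\<Sum>k\<in>?C. _\<bar> \<le> ?D * _")
  using assms(5)
proof
  assume zero: "sum \<gamma> ?C = 0"
  have "(\<Sum>k\<in>?C. \<gamma> k * \<phi> (P k)) = (\<Sum>k\<in>?C. \<gamma> k * (\<phi> (P k) - \<phi> (P i)))"
    using zero by (simp add: algebra_simps sum_subtractf sum_distrib_right[symmetric])
  also have "\<bar>\<dots>\<bar> \<le> ?D * (\<Sum>k\<in>?C. \<bar>\<gamma> k\<bar>)"
  proof (rule abs_sum_mult_le)
    fix k assume "k \<in> ?C"
    then have "dist (P i) (P k) \<le> real (card J ^ 2) * L" by (rule dist_le_in_chain_class[OF assms(1,2)])
    then show "\<bar>\<phi> (P k) - \<phi> (P i)\<bar> \<le> ?D"
      using Lip0_unit_ball_dist[OF \<phi>, of "P k" "P i"] assms(2) by (simp add: dist_commute algebra_simps)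
  qed
  finally show ?thesis .
next
  assume "\<exists>j\<in>?C. dist (P j) z \<le> L"
  then obtain j where j: "j \<in> ?C" "dist (P j) z \<le> L" by blast
  show ?thesis
  proof (rule abs_sum_mult_le)
    fix k assume "k \<in> ?C"
    then have "k \<in> chain_class L P J j" using chain_class_eq[OF j(1)] by simp
    then have "dist (P j) (P k) \<le> real (card J ^ 2) * L" by (rule dist_le_in_chain_class[OF assms(1,2)])
    moreover have "dist (P k) z \<le> dist (P j) (P k) + dist (P j) z"
      using dist_triangle[of "P k" z "P j"] by (simp add: dist_commute)
    ultimately show "\<bar>\<phi> (P k)\<bar> \<le> ?D"
      using Lip0_unit_ball_abs[OF \<phi>, of "P k"] j(2) by (simp add: algebra_simps)
  qed
qed

lemma dnorm_comb_le_of_subset_sums: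
  fixes P :: "'j \<Rightarrow> 'a::metric_space"
  assumes "finite J" "0 < m"
    and gap: "\<forall>S\<subseteq>J. sum a S \<noteq> 0 \<longrightarrow> m \<le> \<bar>sum a S\<bar>"
    and zero: "\<forall>S\<subseteq>J. sum a S = 0 \<longrightarrow> sum \<gamma> S = 0"
    and bound: "dnorm z (comb z J a P) \<le> B"
  shows "dnorm z (comb z J \<gamma> P) \<le> (real (card J ^ 2) + 1) * (B / m + 1) * (\<Sum>k\<in>J. \<bar>\<gamma> k\<bar>)"
proof (rule dnorm_leI)
  fix \<phi> assume \<phi>: "\<phi> \<in> Lip0 z" "lipconst \<phi> \<le> 1"
  have B: "\<bar>\<Sum>k\<in>J. a k * \<psi> (P k)\<bar> \<le> B" if "\<psi> \<in> Lip0 z" "lipconst \<psi> \<le> 1" for \<psi>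
  proof -
    have "\<bar>comb z J a P \<psi>\<bar> \<le> dnorm z (comb z J a P)"
      by (rule abs_le_dnorm[OF Free_dbounded[OF comb_in_Free[OF assms(1)]] that])
    then show ?thesis using bound by (simp add: comb_apply[OF that(1)])
  qed
  have "0 \<le> B" using B[OF Lip0_unit_ball_zero] by simp
  define L where "L = B / m + 1"
  have "0 < L" using \<open>0 \<le> B\<close> \<open>0 < m\<close> by (simp add: L_def add_nonneg_pos)
  have "B < L * m" using \<open>0 < m\<close> by (simp add: L_def algebra_simps)
  let ?C = "chain_class L P J"
  have class_ok: "sum \<gamma> (?C i) = 0 \<or> (\<exists>j\<in>?C i. dist (P j) z \<le> L)" if "i \<in> J" for i
  proof (rule disjCI)
    assume near: "\<not> (\<exists>j\<in>?C i. dist (P j) z \<le> L)"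
    have far_rest: "L \<le> dist (P j) (P k)" if "k \<in> ?C i" "j \<in> J - ?C i" for k j
      using dist_gt_outside_chain_class[OF that(1), of j] that(2) by (simp add: dist_commute)
    have far_base: "L \<le> dist z (P k)" if "k \<in> ?C i" for k
      using near that by (force simp: dist_commute)
    have "?C i \<noteq> {}" using chain_class_refl[OF that, of L P] \<open>0 < L\<close> by auto
    then have "L * \<bar>sum a (?C i)\<bar> \<le> B"
      using \<open>0 < L\<close> far_rest far_base
      by (intro isolated_sum_bound[OF assms(1) chain_class_subset _ _ _ _ B]) simp_all
    then have "L * \<bar>sum a (?C i)\<bar> < L * m" using \<open>B < L * m\<close> by linarith
    then have "\<bar>sum a (?C i)\<bar> < m" using \<open>0 < L\<close> by simp
    then have "sum a (?C i) = 0" using gap chain_class_subset[of L P J i] by (meson not_less)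
    then show "sum \<gamma> (?C i) = 0" using zero chain_class_subset[of L P J i] by simp
  qed
  have "\<bar>comb z J \<gamma> P \<phi>\<bar> = \<bar>\<Sum>C\<in>?C ` J. \<Sum>k\<in>C. \<gamma> k * \<phi> (P k)\<bar>"
    using sum_chain_classes[OF assms(1) order_less_imp_le[OF \<open>0 < L\<close>],
        where h = "\<lambda>k. \<gamma> k * \<phi> (P k)" and P = P]
    by (simp add: comb_apply[OF \<phi>(1)])
  also have "\<dots> \<le> (\<Sum>C\<in>?C ` J. \<bar>\<Sum>k\<in>C. \<gamma> k * \<phi> (P k)\<bar>)" by (rule sum_abs)
  also have "\<dots> \<le> (\<Sum>C\<in>?C ` J. (real (card J ^ 2) + 1) * L * (\<Sum>k\<in>C. \<bar>\<gamma> k\<bar>))"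
    using chain_class_sum_bound[OF assms(1) _ \<phi> class_ok] \<open>0 < L\<close>
    by (intro sum_mono) (auto simp: less_imp_le)
  also have "\<dots> = (real (card J ^ 2) + 1) * L * (\<Sum>k\<in>J. \<bar>\<gamma> k\<bar>)"
    using sum_chain_classes[OF assms(1) order_less_imp_le[OF \<open>0 < L\<close>],
        where h = "\<lambda>k. \<bar>\<gamma> k\<bar>" and P = P]
    by (simp add: sum_distrib_left)
  finally show "\<bar>comb z J \<gamma> P \<phi>\<bar> \<le> (real (card J ^ 2) + 1) * (B / m + 1) * (\<Sum>k\<in>J. \<bar>\<gamma> k\<bar>)"
    by (simp add: L_def)
qed

lemma subset_sums_gap:
  fixes a :: "'j \<Rightarrow> real"
  assumes "finite J"
  obtains m where "0 < m" "\<forall>S\<subseteq>J. sum a S \<noteq> 0 \<longrightarrow> m \<le> \<bar>sum a S\<bar>"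
proof
  define V where "V = (\<lambda>S. \<bar>sum a S\<bar>) ` {S. S \<subseteq> J \<and> sum a S \<noteq> 0}"
  have "finite V" unfolding V_def using assms by simp
  then show "0 < Min (insert 1 V)" by (auto simp: V_def)
  show "\<forall>S\<subseteq>J. sum a S \<noteq> 0 \<longrightarrow> Min (insert 1 V) \<le> \<bar>sum a S\<bar>"
    using \<open>finite V\<close> by (auto simp: V_def intro: Min_le)
qed

lemma generic_perturbation:
  fixes \<beta> \<gamma> :: "'j \<Rightarrow> real"
  assumes "finite J" "0 < t0"
  obtains t where "0 < t" "t < t0" "\<forall>S\<subseteq>J. sum (\<lambda>k. \<beta> k + t * \<gamma> k) S = 0 \<longrightarrow> sum \<gamma> S = 0"
proof -
  define Bad where "Bad = (\<lambda>S. - sum \<beta> S / sum \<gamma> S) ` {S. S \<subseteq> J \<and> sum \<gamma> S \<noteq> 0}"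
  have "finite Bad" unfolding Bad_def using assms(1) by simp
  then have "infinite ({0<..<t0} - Bad)" using infinite_Ioo[OF assms(2)] Diff_infinite_finite by blast
  then obtain t where t: "t \<in> {0<..<t0}" "t \<notin> Bad" using infinite_imp_nonempty by blast
  have "sum \<gamma> S = 0" if "S \<subseteq> J" "sum (\<lambda>k. \<beta> k + t * \<gamma> k) S = 0" for S
  proof (rule ccontr)
    assume "sum \<gamma> S \<noteq> 0"
    moreover have "sum \<beta> S + t * sum \<gamma> S = 0"
      using that(2) by (simp add: sum.distrib sum_distrib_left)
    ultimately have "t = - sum \<beta> S / sum \<gamma> S" by (simp add: field_simps)
    with \<open>sum \<gamma> S \<noteq> 0\<close> \<open>S \<subseteq> J\<close> t(2) show False by (auto simp: Bad_def)
  qed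
  with t(1) that show ?thesis by auto
qed

lemma dnorm_le_add_dnorm_fdiff:
  assumes "dbounded z \<mu>" "dbounded z (fdiff \<mu> \<nu>)"
  shows "dnorm z \<nu> \<le> dnorm z \<mu> + dnorm z (fdiff \<mu> \<nu>)"
proof (rule dnorm_leI)
  fix \<phi> assume \<phi>: "\<phi> \<in> Lip0 z" "lipconst \<phi> \<le> 1"
  have "\<bar>\<nu> \<phi>\<bar> \<le> \<bar>\<mu> \<phi>\<bar> + \<bar>fdiff \<mu> \<nu> \<phi>\<bar>" by (simp add: fdiff_def)
  also have "\<dots> \<le> dnorm z \<mu> + dnorm z (fdiff \<mu> \<nu>)"
    by (intro add_mono abs_le_dnorm[OF assms(1) \<phi>] abs_le_dnorm[OF assms(2) \<phi>])
  finally show "\<bar>\<nu> \<phi>\<bar> \<le> dnorm z \<mu> + dnorm z (fdiff \<mu> \<nu>)" .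
qed

lemma Rset_frequently_close:
  assumes "\<mu> \<in> Rset z T"
  shows "\<exists>\<^sub>F n in sequentially. dnorm z (fdiff \<mu> ((T ^^ n) \<mu>)) < 1"
proof (rule ccontr)
  assume "\<not> ?thesis"
  then have "\<forall>\<^sub>F n in sequentially. ereal 1 \<le> ereal (dnorm z (fdiff \<mu> ((T ^^ n) \<mu>)))"
    by (simp add: not_frequently not_less)
  then have "ereal 1 \<le> liminf (\<lambda>n. ereal (dnorm z (fdiff \<mu> ((T ^^ n) \<mu>))))"
    by (rule Liminf_bounded)
  with assms show False by (simp add: Rset_def)
qed

lemma recurrent_comb_not_escaping:
  assumes T: "bounded_linear_on_Free z T" "\<forall>x. T (delta z x) = delta z (f x)"
    and "finite J" and zero: "\<forall>S\<subseteq>J. sum a S = 0 \<longrightarrow> sum \<gamma> S = 0"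
    and "comb z J a P \<in> Rset z T"
  shows "comb z J \<gamma> P \<notin> Aset z T"
proof
  assume escaping: "comb z J \<gamma> P \<in> Aset z T"
  obtain m where m: "0 < m" "\<forall>S\<subseteq>J. sum a S \<noteq> 0 \<longrightarrow> m \<le> \<bar>sum a S\<bar>"
    using subset_sums_gap[OF \<open>finite J\<close>] by blast
  define w where "w = comb z J a P"
  define K where "K = (real (card J ^ 2) + 1) * ((dnorm z w + 1) / m + 1) * (\<Sum>k\<in>J. \<bar>\<gamma> k\<bar>)"
  have bounded: "dnorm z ((T ^^ n) (comb z J \<gamma> P)) \<le> K"
    if close: "dnorm z (fdiff w ((T ^^ n) w)) < 1" for n
  proof -
    have orbit: "(T ^^ n) (comb z J c P) = comb z J c ((f ^^ n) \<circ> P)" for c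
      by (rule bounded_linear_on_Free_funpow_comb[OF T \<open>finite J\<close>])
    have "dbounded z w" unfolding w_def by (intro Free_dbounded comb_in_Free \<open>finite J\<close>)
    moreover have "dbounded z ((T ^^ n) w)"
      unfolding w_def orbit by (intro Free_dbounded comb_in_Free \<open>finite J\<close>)
    ultimately have "dnorm z ((T ^^ n) w) \<le> dnorm z w + 1"
      using dnorm_le_add_dnorm_fdiff[of z w] dbounded_fdiff close by fastforce
    then show ?thesis unfolding K_def orbit
      by (intro dnorm_comb_le_of_subset_sums[OF \<open>finite J\<close> m zero]) (simp add: w_def orbit)
  qed
  have "\<exists>\<^sub>F n in sequentially. dnorm z (fdiff w ((T ^^ n) w)) < 1"
    using Rset_frequently_close assms(5) by (simp add: w_def)
  moreover have "\<forall>\<^sub>F n in sequentially. K + 1 \<le> dnorm z ((T ^^ n) (comb z J \<gamma> P))"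
    using escaping by (simp add: Aset_def filterlim_at_top)
  ultimately have "\<exists>\<^sub>F n in sequentially. False"
    by (rule frequently_eventually_frequently[THEN frequently_mono[rotated]])
       (use bounded in fastforce)
  then show False by simp
qed

lemma free_interior_meets_delta_span:
  assumes "\<mu>\<^sub>0 \<in> free_interior z X"
  obtains \<mu> where "\<mu> \<in> delta_span z" "\<mu> \<in> X"
proof -
  obtain \<epsilon> where \<epsilon>: "\<mu>\<^sub>0 \<in> Free z" "0 < \<epsilon>" "\<forall>\<nu>\<in>Free z. dnorm z (fdiff \<nu> \<mu>\<^sub>0) < \<epsilon> \<longrightarrow> \<nu> \<in> X"
    using assms unfolding free_interior_def by blast
  obtain \<mu> where \<mu>: "\<mu> \<in> delta_span z" "dnorm z (fdiff \<mu>\<^sub>0 \<mu>) < \<epsilon>"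
    using \<epsilon>(1,2) unfolding Free_def by blast
  have "\<mu> \<in> X"
    using \<mu> \<epsilon>(3) delta_span_subset_Free dnorm_fdiff_commute[of z \<mu>\<^sub>0 \<mu>] by auto
  with \<mu>(1) show ?thesis by (rule that)
qed

lemma free_interior_perturbation:
  fixes z :: "'a::metric_space"
  assumes "\<nu>\<^sub>0 \<in> free_interior z X" "\<mu> \<in> delta_span z"
  obtains J :: "('a + 'a) set" and P \<beta> \<gamma> t\<^sub>0 where "finite J" "0 < t\<^sub>0" "\<mu> = comb z J \<gamma> P"
    "\<And>t. 0 < t \<Longrightarrow> t < t\<^sub>0 \<Longrightarrow> comb z J (\<lambda>k. \<beta> k + t * \<gamma> k) P \<in> X"
proof -
  obtain \<epsilon> where \<epsilon>: "\<nu>\<^sub>0 \<in> Free z" "0 < \<epsilon>" "\<forall>\<nu>\<in>Free z. dnorm z (fdiff \<nu> \<nu>\<^sub>0) < \<epsilon> \<longrightarrow> \<nu> \<in> X"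
    using assms(1) unfolding free_interior_def by blast
  have "0 < \<epsilon> / 2" using \<epsilon>(2) by simp
  then obtain \<nu> where \<nu>: "\<nu> \<in> delta_span z" "dnorm z (fdiff \<nu>\<^sub>0 \<nu>) < \<epsilon> / 2"
    using \<epsilon>(1) unfolding Free_def by blast
  obtain J :: "('a + 'a) set" and P \<beta> \<gamma> where J: "finite J" "\<nu> = comb z J \<beta> P" "\<mu> = comb z J \<gamma> P"
    by (rule delta_span_common_comb[OF \<nu>(1) assms(2)])
  have "\<mu> \<in> Free z" "\<nu> \<in> Free z" using assms(2) \<nu>(1) delta_span_subset_Free by blast+
  then have bounded: "dbounded z \<mu>" "dbounded z (fdiff \<nu> \<nu>\<^sub>0)"
    using Free_dbounded \<epsilon>(1) dbounded_fdiff by blast+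
  define t\<^sub>0 where "t\<^sub>0 = \<epsilon> / (2 * (dnorm z \<mu> + 1))"
  have "0 < t\<^sub>0" using \<epsilon>(2) dnorm_nonneg[OF bounded(1)] by (simp add: t\<^sub>0_def)
  moreover have "comb z J (\<lambda>k. \<beta> k + t * \<gamma> k) P \<in> X" if t: "0 < t" "t < t\<^sub>0" for t
  proof -
    have w: "comb z J (\<lambda>k. \<beta> k + t * \<gamma> k) P = (\<lambda>\<phi>. 1 * \<nu> \<phi> + t * \<mu> \<phi>)"
      unfolding J(2,3) comb_lincomb by simp
    have "dnorm z (fdiff (comb z J (\<lambda>k. \<beta> k + t * \<gamma> k) P) \<nu>\<^sub>0) \<le> t * dnorm z \<mu> + dnorm z (fdiff \<nu> \<nu>\<^sub>0)"
    proof (rule dnorm_leI)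
      fix \<phi> assume \<phi>: "\<phi> \<in> Lip0 z" "lipconst \<phi> \<le> 1"
      have "\<bar>fdiff (comb z J (\<lambda>k. \<beta> k + t * \<gamma> k) P) \<nu>\<^sub>0 \<phi>\<bar> \<le> t * \<bar>\<mu> \<phi>\<bar> + \<bar>fdiff \<nu> \<nu>\<^sub>0 \<phi>\<bar>"
        using abs_triangle_ineq[of "t * \<mu> \<phi>" "\<nu> \<phi> - \<nu>\<^sub>0 \<phi>"] t(1)
        by (simp add: w fdiff_def abs_mult algebra_simps)
      also have "\<dots> \<le> t * dnorm z \<mu> + dnorm z (fdiff \<nu> \<nu>\<^sub>0)"
        using abs_le_dnorm[OF bounded(1) \<phi>] abs_le_dnorm[OF bounded(2) \<phi>] t(1)
        by (intro add_mono mult_left_mono) simp_all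
      finally show "\<bar>fdiff (comb z J (\<lambda>k. \<beta> k + t * \<gamma> k) P) \<nu>\<^sub>0 \<phi>\<bar> \<le> \<dots>" .
    qed
    moreover have "t * dnorm z \<mu> < \<epsilon> / 2"
    proof -
      have "t * dnorm z \<mu> \<le> t * (dnorm z \<mu> + 1)" using t(1) by simp
      also have "\<dots> < t\<^sub>0 * (dnorm z \<mu> + 1)"
        using t dnorm_nonneg[OF bounded(1)] by (intro mult_strict_right_mono) simp_all
      also have "\<dots> = \<epsilon> / 2" using dnorm_nonneg[OF bounded(1)] by (simp add: t\<^sub>0_def field_simps)
      finally show ?thesis .
    qed
    ultimately have "dnorm z (fdiff (comb z J (\<lambda>k. \<beta> k + t * \<gamma> k) P) \<nu>\<^sub>0) < \<epsilon>"
      using \<nu>(2) by (simp add: dnorm_fdiff_commute[of z \<nu>\<^sub>0])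
    then show ?thesis using \<epsilon>(3) comb_in_Free[OF J(1)] by blast
  qed
  ultimately show ?thesis by (rule that[OF J(1) _ J(3)])
qed

theorem theorem1p3:
  fixes z :: "'a::complete_space"
    and f :: "'a \<Rightarrow> 'a"
    and T :: "(('a \<Rightarrow> real) \<Rightarrow> real) \<Rightarrow> (('a \<Rightarrow> real) \<Rightarrow> real)"
  assumes "\<exists>C. lipschitz_on C UNIV f"
    and "f z = z"
    and "bounded_linear_on_Free z T"
    and "\<forall>x. T (delta z x) = delta z (f x)"
    and "free_interior z (Rset z T) \<noteq> {}"
  shows "free_interior z (Aset z T) = {}"
proof (rule ccontr)
  assume "free_interior z (Aset z T) \<noteq> {}"
  then obtain \<mu>\<^sub>0 where "\<mu>\<^sub>0 \<in> free_interior z (Aset z T)" by blast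
  then obtain \<mu> where \<mu>: "\<mu> \<in> delta_span z" "\<mu> \<in> Aset z T"
    by (rule free_interior_meets_delta_span)
  obtain \<nu>\<^sub>0 where "\<nu>\<^sub>0 \<in> free_interior z (Rset z T)" using assms(5) by blast
  then obtain J :: "('a + 'a) set" and P \<beta> \<gamma> t\<^sub>0 where J: "finite J" "0 < t\<^sub>0" "\<mu> = comb z J \<gamma> P"
    and recurrent: "\<And>t. 0 < t \<Longrightarrow> t < t\<^sub>0 \<Longrightarrow> comb z J (\<lambda>k. \<beta> k + t * \<gamma> k) P \<in> Rset z T"
    by (rule free_interior_perturbation[OF _ \<mu>(1)]) blast
  obtain t where t: "0 < t" "t < t\<^sub>0"
    and generic: "\<forall>S\<subseteq>J. sum (\<lambda>k. \<beta> k + t * \<gamma> k) S = 0 \<longrightarrow> sum \<gamma> S = 0"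
    by (rule generic_perturbation[OF J(1,2)])
  have "\<mu> \<notin> Aset z T"
    unfolding J(3) using assms(3,4) J(1) generic recurrent[OF t]
    by (rule recurrent_comb_not_escaping)
  with \<mu>(2) show False by contradiction
qed

end
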